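(* Let $m$ be a positive integer and $\mathcal{U}=\{S_0,S_{2,1^0},\ldots,S_{2,1^{m-1}}\}$. Define the following vectors $(y_0,\ldots,y_m)\in\mathbb{R}^{m+1}$ (where a vector is only defined when its index range for $i$ is nonempty, and $k$ ranges over $0,\ldots,m$): $\mathbf{s}_{1,m}$: $y_0=3,y_1=6$, $y_k=\max(3k,2k+4)$ for $k\ge2$ (i.e. $(3,6,8,10,12,15,\ldots,3m)$); $\mathbf{s}_{2,m}$: $y_0=6,y_1=12,y_2=16$, $y_k=6k+3$ for $k\ge3$; $\mathbf{s}_{3,m}$: $y_0=2,y_1=4,y_2=5$, $y_k=2k$ for $k\ge3$; $\mathbf{s}_{4,m}$: $y_0=3,y_1=6,y_2=8$, $y_k=3k+1$ for $k\ge3$; $\mathbf{r}_{1,m,i}$ ($5\le i\le m-1$): $y_0=6i-15,y_1=12i-30,y_2=16i-40$, $y_k=(6i-18)k+3i$ for $3\le k\le i$, $y_k=(6i-15)k$ for $k\ge i$; $\mathbf{r}_{2,m,i}$ ($5\le i\le m-1$): $y_0=i+2$, $y_k=i(k+2)$ for $1\le k\le i$, $y_k=(i+2)k$ for $k\ge i$; $\mathbf{r}_{3,m,i}$ ($5\le i\le m-1$): $y_0=3i-9,y_1=6i-18,y_2=8i-24$, $y_k=(3i-10)k+i$ for $3\le k\le i$, $y_k=(3i-9)k$ for $k\ge i$; $\mathbf{r}_{4,m,i}$ ($5\le i\le m-1$): $y_0=2i-5,y_1=4i-10$, $y_k=(2i-6)k+i$ for $2\le k\le i$, $y_k=(2i-5)k$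 for $k\ge i$; $\mathbf{r}_{5,m,i}$ ($3\le i\le m-1$): $y_k=\max(i,k)$ for all $k$; $\mathbf{r}_{6,m,i}$ ($4\le i\le m-1$): $y_0=i+1,y_1=3i-1$, $y_k=(i-1)k+2i$ for $2\le k\le i$, $y_k=(i+1)k$ for $k\ge i$. Then all of $\mathbf{s}_{j,m}$ ($1\le j\le4$) and $\mathbf{r}_{l,m,i}$ ($1\le l\le6$, $i$ in the stated range) lie in $\operatorname{trop}(\mathcal{N}_{\mathcal{U}})$.
   Context: All graphs are finite; $\hom(H;G)$ is the number of graph homomorphisms from $H$ to $G$. $S_0$ is a single vertex; for $k\ge0$, $S_{2,1^k}$ is the tree with vertex set $\{1,\ldots,k+3\}$ and edge set $\{\{1,j\}:2\le j\le k+2\}\cup\{\{k+2,k+3\}\}$. $\mathcal{N}_{\mathcal{U}}$ is the set of vectors $(\hom(S_0;G),\hom(S_{2,1^0};G),\ldots,\hom(S_{2,1^{m-1}};G))$ over all graphs $G$; $\operatorname{trop}(\mathcal{N}_{\mathcal{U}})$ is the closure of the conical hull of the coordinatewise logarithms of the points of $\mathcal{N}_{\mathcal{U}}$ with all coordinates positive (equivalently $\lim_{\tau\to\infty}\log_\tau$ of that set). *)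

theory Defs
  imports "HOL-Analysis.Analysis"
begin

text \<open>A graph is a pair (V, E) of a vertex set of natural numbers and an adjacency
  relation. Every finite graph is isomorphic to one of this form.\<close>

type_synonym graph = "nat set \<times> (nat \<Rightarrow> nat \<Rightarrow> bool)"

definition simple_graph :: "graph \<Rightarrow> bool" where
  "simple_graph G \<longleftrightarrow> finite (fst G) \<and>
     (\<forall>u v. snd G u v \<longrightarrow> u \<in> fst G \<and> v \<in> fst G \<and> snd G v u \<and> u \<noteq> v)"

definition homs :: "graph \<Rightarrow> graph \<Rightarrow> (nat \<Rightarrow> nat) set" where
  "homs H G = {f \<in> fst H \<rightarrow>\<^sub>E fst G. \<forall>u v. snd H u v \<longrightarrow> snd G (f u) (f v)}"

definition hom_count :: "graph \<Rightarrow> graph \<Rightarrow> nat" where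
  "hom_count H G = card (homs H G)"

definition S0 :: graph where
  "S0 = ({1}, \<lambda>u v. False)"

definition S21 :: "nat \<Rightarrow> graph" where
  "S21 k = ({1..k+3}, \<lambda>u v.
      (u = 1 \<and> 2 \<le> v \<and> v \<le> k+2) \<or> (v = 1 \<and> 2 \<le> u \<and> u \<le> k+2) \<or>
      (u = k+2 \<and> v = k+3) \<or> (u = k+3 \<and> v = k+2))"

text \<open>A vector (y_0,...,y_m) in R^{m+1} is represented as a function nat => real
  that vanishes at indices > m; the topology on nat => real is the product topology,
  which on such vectors agrees with the Euclidean one.\<close>

definition trunc_vec :: "nat \<Rightarrow> (nat \<Rightarrow> real) \<Rightarrow> nat \<Rightarrow> real" where
  "trunc_vec m y = (\<lambda>k. if k \<le> m then y k else 0)"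

definition hom_vec :: "nat \<Rightarrow> graph \<Rightarrow> nat \<Rightarrow> real" where
  "hom_vec m G = trunc_vec m (\<lambda>k. if k = 0 then real (hom_count S0 G)
                                  else real (hom_count (S21 (k - 1)) G))"

definition N_U :: "nat \<Rightarrow> (nat \<Rightarrow> real) set" where
  "N_U m = {hom_vec m G | G. simple_graph G}"

definition log_vec :: "nat \<Rightarrow> (nat \<Rightarrow> real) \<Rightarrow> nat \<Rightarrow> real" where
  "log_vec m x = trunc_vec m (\<lambda>k. ln (x k))"

definition conical_hull :: "(nat \<Rightarrow> real) set \<Rightarrow> (nat \<Rightarrow> real) set" where
  "conical_hull A = {x. \<exists>F c. finite F \<and> F \<subseteq> A \<and> (\<forall>v\<in>F. 0 \<le> c v) \<and>
                         x = (\<lambda>k. \<Sum>v\<in>F. c v * v k)}"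

definition trop_N_U :: "nat \<Rightarrow> (nat \<Rightarrow> real) set" where
  "trop_N_U m = closure (conical_hull
      (log_vec m ` {x \<in> N_U m. \<forall>k\<le>m. 0 < x k}))"

definition s1 :: "nat \<Rightarrow> real" where
  "s1 k = (if k = 0 then 3 else if k = 1 then 6 else max (3 * real k) (2 * real k + 4))"

definition s2 :: "nat \<Rightarrow> real" where
  "s2 k = (if k = 0 then 6 else if k = 1 then 12 else if k = 2 then 16 else 6 * real k + 3)"

definition s3 :: "nat \<Rightarrow> real" where
  "s3 k = (if k = 0 then 2 else if k = 1 then 4 else if k = 2 then 5 else 2 * real k)"

definition s4 :: "nat \<Rightarrow> real" where
  "s4 k = (if k = 0 then 3 else if k = 1 then 6 else if k = 2 then 8 else 3 * real k + 1)"

definition r1 :: "nat \<Rightarrow> nat \<Rightarrow> real" where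
  "r1 i k = (if k = 0 then 6 * real i - 15 else if k = 1 then 12 * real i - 30
             else if k = 2 then 16 * real i - 40
             else if k \<le> i then (6 * real i - 18) * real k + 3 * real i
             else (6 * real i - 15) * real k)"

definition r2 :: "nat \<Rightarrow> nat \<Rightarrow> real" where
  "r2 i k = (if k = 0 then real i + 2
             else if k \<le> i then real i * (real k + 2)
             else (real i + 2) * real k)"

definition r3 :: "nat \<Rightarrow> nat \<Rightarrow> real" where
  "r3 i k = (if k = 0 then 3 * real i - 9 else if k = 1 then 6 * real i - 18
             else if k = 2 then 8 * real i - 24
             else if k \<le> i then (3 * real i - 10) * real k + real i
             else (3 * real i - 9) * real k)"

definition r4 :: "nat \<Rightarrow> nat \<Rightarrow> real" where
  "r4 i k = (if k = 0 then 2 * real i - 5 else if k = 1 then 4 * real i - 10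
             else if k \<le> i then (2 * real i - 6) * real k + real i
             else (2 * real i - 5) * real k)"

definition r5 :: "nat \<Rightarrow> nat \<Rightarrow> real" where
  "r5 i k = max (real i) (real k)"

definition r6 :: "nat \<Rightarrow> nat \<Rightarrow> real" where
  "r6 i k = (if k = 0 then real i + 1 else if k = 1 then 3 * real i - 1
             else if k \<le> i then (real i - 1) * real k + 2 * real i
             else (real i + 1) * real k)"

end

(* Each vector is the exponent vector of a family of graphs G_n with polynomially growing
   homomorphism counts: if hom(F; G_n) = n^(y_F + o(1)) for every F in U, then the points
   (1 / ln n) log hom_vec(G_n) of the cone converge to y.  Counting homomorphisms by the images of
   the centre and of the long leg gives hom(S_{2,1^k}; G) = sum_v deg(v)^k * sum_{w ~ v} deg(w).
   The families are disjoint unions of at most three joins of n^x independent hub vertices with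
   n^q disjoint copies of K_{n^r,n^r}; their counts are explicit polynomials in n whose degrees are
   maxima of linear forms in k, and the components are chosen so that these maxima are exactly
   the given piecewise linear vectors. *)

theory Submission
  imports Defs
begin

definition nbhd :: "'a set \<Rightarrow> ('a \<Rightarrow> 'a \<Rightarrow> bool) \<Rightarrow> 'a \<Rightarrow> 'a set" where
  "nbhd V A v = {w \<in> V. A v w}"

definition spider_count :: "nat \<Rightarrow> 'a set \<Rightarrow> ('a \<Rightarrow> 'a \<Rightarrow> bool) \<Rightarrow> nat" where
  "spider_count k V A = (\<Sum>v\<in>V. card (nbhd V A v) ^ k * (\<Sum>w\<in>nbhd V A v. card (nbhd V A w)))"

lemma hom_count_S0: "hom_count S0 G = card (fst G)"
proof -
  have "homs S0 G = {1} \<rightarrow>\<^sub>E fst G" by (auto simp: homs_def S0_def)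
  then show ?thesis by (simp add: hom_count_def card_PiE)
qed

lemma homs_S21_iff:
  assumes "simple_graph (V, A)"
  shows "f \<in> homs (S21 k) (V, A) \<longleftrightarrow>
    f \<in> {1..k+3} \<rightarrow>\<^sub>E V \<and> (\<forall>j\<in>{2..k+2}. A (f 1) (f j)) \<and> A (f (k+2)) (f (k+3))"
proof -
  have "A u v \<Longrightarrow> A v u" for u v using assms by (simp add: simple_graph_def)
  then show ?thesis unfolding homs_def S21_def by (auto 5 0)
qed

definition spider_homs ::
  "nat \<Rightarrow> nat set \<Rightarrow> (nat \<Rightarrow> nat \<Rightarrow> bool) \<Rightarrow> nat \<times> nat \<times> nat \<Rightarrow> (nat \<Rightarrow> nat) set" where
  "spider_homs k V A = (\<lambda>(v, w, z). PiE {1..k+3}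
     (\<lambda>i. if i = 1 then {v} else if i = k+2 then {w} else if i = k+3 then {z} else nbhd V A v))"

lemma S21_domain_eq: "{1..k+3} = insert 1 (insert (k+2) (insert (k+3) {2..k+1::nat}))"
  by auto

lemma mem_spider_homs:
  "f \<in> spider_homs k V A (v, w, z) \<longleftrightarrow> f \<in> extensional {1..k+3} \<and>
     f 1 = v \<and> f (k+2) = w \<and> f (k+3) = z \<and> (\<forall>j\<in>{2..k+1}. f j \<in> nbhd V A v)"
  unfolding spider_homs_def S21_domain_eq by (auto simp: PiE_iff)

lemma card_spider_homs: "card (spider_homs k V A t) = card (nbhd V A (fst t)) ^ k"
proof -
  obtain v w z where t: "t = (v, w, z)" by (cases t) auto
  have "(\<Prod>i\<in>{2..k+1}. card (if i = 1 then {v} else if i = k+2 then {w} else if i = k+3 then {z}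
      else nbhd V A v)) = (\<Prod>i\<in>{2..k+1}. card (nbhd V A v))"
    by (rule prod.cong) auto
  then show ?thesis
    unfolding spider_homs_def t S21_domain_eq by (simp add: card_PiE)
qed

lemma homs_S21_eq_UN:
  assumes "simple_graph (V, A)"
  shows "homs (S21 k) (V, A) =
    (\<Union>t\<in>(SIGMA v:V. SIGMA w:nbhd V A v. nbhd V A w). spider_homs k V A t)"
proof -
  have inV: "A u v \<Longrightarrow> u \<in> V \<and> v \<in> V" for u v using assms by (simp add: simple_graph_def)
  show ?thesis
  proof (intro set_eqI iffI)
    fix f assume "f \<in> homs (S21 k) (V, A)"
    then have "f \<in> {1..k+3} \<rightarrow>\<^sub>E V" "\<forall>j\<in>{2..k+2}. A (f 1) (f j)" "A (f (k+2)) (f (k+3))"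
      using homs_S21_iff[OF assms] by auto
    then have "(f 1, f (k+2), f (k+3)) \<in> (SIGMA v:V. SIGMA w:nbhd V A v. nbhd V A w)"
      and "f \<in> spider_homs k V A (f 1, f (k+2), f (k+3))"
      using inV unfolding mem_spider_homs by (auto simp: nbhd_def PiE_iff)
    then show "f \<in> (\<Union>t\<in>(SIGMA v:V. SIGMA w:nbhd V A v. nbhd V A w). spider_homs k V A t)"
      by blast
  next
    fix f assume "f \<in> (\<Union>t\<in>(SIGMA v:V. SIGMA w:nbhd V A v. nbhd V A w). spider_homs k V A t)"
    then obtain v w z where t: "(v, w, z) \<in> (SIGMA v:V. SIGMA w:nbhd V A v. nbhd V A w)"
      and "f \<in> spider_homs k V A (v, w, z)" by auto
    then have "f \<in> extensional {1..k+3}" "f 1 = v" "f (k+2) = w" "f (k+3) = z"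
      "\<forall>j\<in>{2..k+1}. f j \<in> nbhd V A v"
      unfolding mem_spider_homs by auto
    moreover have "{2..k+2} = insert (k+2) {2..k+1}" by auto
    ultimately show "f \<in> homs (S21 k) (V, A)"
      using t unfolding homs_S21_iff[OF assms] S21_domain_eq by (auto simp: nbhd_def PiE_iff)
  qed
qed

lemma hom_count_S21:
  assumes "simple_graph G"
  shows "hom_count (S21 k) G = spider_count k (fst G) (snd G)"
proof -
  obtain V A where G: "G = (V, A)" by fastforce
  have fin: "finite V" using assms G by (simp add: simple_graph_def)
  let ?N = "nbhd V A"
  let ?T = "SIGMA v:V. SIGMA w:?N v. ?N w"
  have finN: "finite (?N v)" for v using fin by (simp add: nbhd_def)
  have "hom_count (S21 k) G = (\<Sum>t\<in>?T. card (spider_homs k V A t))"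
    unfolding hom_count_def G homs_S21_eq_UN[OF assms[unfolded G]]
  proof (rule card_UN_disjoint)
    show "finite ?T" using fin finN by auto
    show "\<forall>t\<in>?T. finite (spider_homs k V A t)"
      using finN by (auto simp: spider_homs_def intro!: finite_PiE)
    show "\<forall>t\<in>?T. \<forall>t'\<in>?T. t \<noteq> t' \<longrightarrow> spider_homs k V A t \<inter> spider_homs k V A t' = {}"
      using mem_spider_homs by (metis disjoint_iff prod_cases3)
  qed
  also have "\<dots> = (\<Sum>v\<in>V. \<Sum>p\<in>(SIGMA w:?N v. ?N w). card (?N v) ^ k)"
    using sum.Sigma[of V "\<lambda>v. SIGMA w:?N v. ?N w" "\<lambda>v p. card (?N v) ^ k"] fin finN
    by (simp add: card_spider_homs split_def)
  also have "\<dots> = spider_count k V A"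
    using finN by (simp add: spider_count_def card_SigmaI mult.commute)
  finally show ?thesis by (simp add: G)
qed

definition graph_of :: "'a::countable set \<Rightarrow> ('a \<Rightarrow> 'a \<Rightarrow> bool) \<Rightarrow> graph" where
  "graph_of V A = (to_nat ` V, \<lambda>u v. u \<in> to_nat ` V \<and> v \<in> to_nat ` V \<and> A (from_nat u) (from_nat v))"

lemma simple_graph_of:
  assumes "finite V" "symp A" "irreflp A"
  shows "simple_graph (graph_of V A)"
  using assms by (auto simp: simple_graph_def graph_of_def symp_def irreflp_def)

lemma nbhd_graph_of:
  assumes "v \<in> V"
  shows "nbhd (fst (graph_of V A)) (snd (graph_of V A)) (to_nat v) = to_nat ` nbhd V A v"
  using assms by (auto simp: nbhd_def graph_of_def)

lemma hom_count_S0_graph_of: "hom_count S0 (graph_of V A) = card V"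
  by (simp add: hom_count_S0 graph_of_def card_image)

lemma hom_count_S21_graph_of:
  assumes "finite V" "symp A" "irreflp A"
  shows "hom_count (S21 k) (graph_of V A) = spider_count k V A"
proof -
  let ?G = "graph_of V A"
  let ?N = "nbhd (fst ?G) (snd ?G)"
  have card_N: "card (?N (to_nat v)) = card (nbhd V A v)" if "v \<in> V" for v
    using that by (simp add: nbhd_graph_of card_image)
  have "hom_count (S21 k) ?G = (\<Sum>u\<in>to_nat ` V. card (?N u) ^ k * (\<Sum>w\<in>?N u. card (?N w)))"
    using hom_count_S21[OF simple_graph_of[OF assms]] by (simp add: spider_count_def graph_of_def)
  also have "\<dots> = (\<Sum>v\<in>V. card (?N (to_nat v)) ^ k * (\<Sum>w\<in>to_nat ` nbhd V A v. card (?N w)))"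
    by (simp add: sum.reindex nbhd_graph_of)
  also have "\<dots> = spider_count k V A"
    unfolding spider_count_def
  proof (rule sum.cong[OF refl])
    fix v assume "v \<in> V"
    moreover have "nbhd V A v \<subseteq> V" by (auto simp: nbhd_def)
    ultimately show "card (?N (to_nat v)) ^ k * (\<Sum>w\<in>to_nat ` nbhd V A v. card (?N w)) =
      card (nbhd V A v) ^ k * (\<Sum>w\<in>nbhd V A v. card (nbhd V A w))"
      by (simp add: sum.reindex card_N subset_iff)
  qed
  finally show ?thesis .
qed

lemma nbhd_Sigma:
  assumes "c \<in> C"
  shows "nbhd (SIGMA c:C. V c) (\<lambda>(c, u) (d, v). c = d \<and> A c u v) (c, u) = {c} \<times> nbhd (V c) (A c) u"
  using assms by (auto simp: nbhd_def)

lemma spider_count_Sigma: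
  assumes "finite C" "\<And>c. c \<in> C \<Longrightarrow> finite (V c)"
  shows "spider_count k (SIGMA c:C. V c) (\<lambda>(c, u) (d, v). c = d \<and> A c u v) =
    (\<Sum>c\<in>C. spider_count k (V c) (A c))"
proof -
  let ?N = "nbhd (SIGMA c:C. V c) (\<lambda>(c, u) (d, v). c = d \<and> A c u v)"
  have summand: "card (?N (c, u)) ^ k * (\<Sum>y\<in>?N (c, u). card (?N y)) =
      card (nbhd (V c) (A c) u) ^ k * (\<Sum>w\<in>nbhd (V c) (A c) u. card (nbhd (V c) (A c) w))"
    if "c \<in> C" for c u
  proof -
    have "{c} \<times> S = Pair c ` S" for S :: "'b set" by auto
    moreover have "inj_on (Pair c) S" for S :: "'b set" by (simp add: inj_on_def)
    ultimately show ?thesis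
      using that by (simp add: nbhd_Sigma sum.reindex card_image)
  qed
  have "spider_count k (SIGMA c:C. V c) (\<lambda>(c, u) (d, v). c = d \<and> A c u v) =
    (\<Sum>(c, u)\<in>(SIGMA c:C. V c).
       card (nbhd (V c) (A c) u) ^ k * (\<Sum>w\<in>nbhd (V c) (A c) u. card (nbhd (V c) (A c) w)))"
    unfolding spider_count_def by (rule sum.cong) (auto simp: summand)
  also have "\<dots> = (\<Sum>c\<in>C. spider_count k (V c) (A c))"
    using assms by (simp add: sum.Sigma spider_count_def)
  finally show ?thesis .
qed

(* The join of p hub vertices (0, a) with q disjoint copies of K_{r,r}: copy s has the vertices
   (s + 1, b) with sides b < r and r <= b < 2r, and every hub is adjacent to every copy vertex. *)
definition join_vertices :: "nat \<times> nat \<times> nat \<Rightarrow> (nat \<times> nat) set" where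
  "join_vertices = (\<lambda>(p, q, r). {0} \<times> {..<p} \<union> Suc ` {..<q} \<times> {..<2 * r})"

fun join_adj :: "nat \<times> nat \<times> nat \<Rightarrow> nat \<times> nat \<Rightarrow> nat \<times> nat \<Rightarrow> bool" where
  "join_adj (p, q, r) (s, a) (t, b) \<longleftrightarrow> (s = 0 \<longleftrightarrow> t \<noteq> 0) \<or> (s \<noteq> 0 \<and> s = t \<and> (a < r \<longleftrightarrow> r \<le> b))"

lemma symp_join_adj: "symp (join_adj c)"
  by (cases c) (auto simp: symp_def)

lemma irreflp_join_adj: "irreflp (join_adj c)"
  by (cases c) (auto simp: irreflp_def)

lemma finite_join_vertices: "finite (join_vertices c)"
  by (auto simp: join_vertices_def split: prod.split)

lemma card_join_vertices: "card (join_vertices (p, q, r)) = p + 2 * q * r"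
  by (simp add: join_vertices_def card_Un_disjoint card_cartesian_product card_image disjoint_iff)

lemma nbhd_join_hub:
  assumes "a < p"
  shows "nbhd (join_vertices (p, q, r)) (join_adj (p, q, r)) (0, a) = Suc ` {..<q} \<times> {..<2 * r}"
  using assms by (auto simp: nbhd_def join_vertices_def)

lemma nbhd_join_block:
  assumes "s < q" "b < 2 * r"
  shows "nbhd (join_vertices (p, q, r)) (join_adj (p, q, r)) (Suc s, b) =
    {0} \<times> {..<p} \<union> {Suc s} \<times> (if b < r then {r..<2 * r} else {..<r})"
  using assms by (auto simp: nbhd_def join_vertices_def)

lemma join_vertices_cases:
  assumes "v \<in> join_vertices (p, q, r)"
  obtains a where "v = (0, a)" "a < p" | s b where "v = (Suc s, b)" "s < q" "b < 2 * r"
  using assms by (auto simp: join_vertices_def)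

lemma card_nbhd_join:
  assumes "v \<in> join_vertices (p, q, r)"
  shows "card (nbhd (join_vertices (p, q, r)) (join_adj (p, q, r)) v) =
    (if fst v = 0 then 2 * q * r else p + r)"
  using assms
proof (cases rule: join_vertices_cases)
  case (1 a)
  then show ?thesis by (simp add: nbhd_join_hub card_cartesian_product card_image)
next
  case (2 s b)
  then show ?thesis
    by (simp add: nbhd_join_block card_Un_disjoint card_cartesian_product Times_Int_Times)
qed

lemma spider_count_join:
  "spider_count j (join_vertices (p, q, r)) (join_adj (p, q, r)) =
    p * ((2 * q * r) ^ j * (2 * q * r * (p + r))) +
    2 * q * r * ((p + r) ^ j * (p * (2 * q * r) + r * (p + r)))"
proof -
  let ?V = "join_vertices (p, q, r)"
  let ?N = "nbhd ?V (join_adj (p, q, r))"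
  have sum_hubs: "(\<Sum>w\<in>S. card (?N w)) = card S * (2 * q * r)" if "S \<subseteq> {0} \<times> {..<p}" for S
  proof -
    have "(\<Sum>w\<in>S. card (?N w)) = (\<Sum>w\<in>S. 2 * q * r)"
      using that by (intro sum.cong refl, subst card_nbhd_join) (auto simp: join_vertices_def)
    then show ?thesis by simp
  qed
  have sum_blocks: "(\<Sum>w\<in>S. card (?N w)) = card S * (p + r)"
    if "S \<subseteq> Suc ` {..<q} \<times> {..<2 * r}" for S
  proof -
    have "(\<Sum>w\<in>S. card (?N w)) = (\<Sum>w\<in>S. p + r)"
      using that by (intro sum.cong refl, subst card_nbhd_join) (auto simp: join_vertices_def)
    then show ?thesis by simp
  qed
  have summand: "card (?N v) ^ j * (\<Sum>w\<in>?N v. card (?N w)) =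
      (if fst v = 0 then (2 * q * r) ^ j * (2 * q * r * (p + r))
       else (p + r) ^ j * (p * (2 * q * r) + r * (p + r)))"
    if "v \<in> ?V" for v
    using that
  proof (cases rule: join_vertices_cases)
    case (1 a)
    then show ?thesis
      by (simp add: sum_blocks nbhd_join_hub card_nbhd_join card_cartesian_product card_image
          mult_ac)
  next
    case (2 s b)
    moreover have "{Suc s} \<times> (if b < r then {r..<2 * r} else {..<r}) \<subseteq> Suc ` {..<q} \<times> {..<2 * r}"
      using 2 by auto
    moreover have "card (?N v) = p + r" using card_nbhd_join[OF that] 2 by simp
    ultimately show ?thesis
      using 2 by (simp add: sum_hubs sum_blocks nbhd_join_block sum.union_disjoint
          card_cartesian_product Times_Int_Times)
  qed
  have "spider_count j ?V (join_adj (p, q, r)) =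
      (\<Sum>v\<in>?V. if fst v = 0 then (2 * q * r) ^ j * (2 * q * r * (p + r))
                 else (p + r) ^ j * (p * (2 * q * r) + r * (p + r)))"
    unfolding spider_count_def by (rule sum.cong[OF refl summand])
  also have "\<dots> = p * ((2 * q * r) ^ j * (2 * q * r * (p + r))) +
      2 * q * r * ((p + r) ^ j * (p * (2 * q * r) + r * (p + r)))"
  proof -
    have "?V \<inter> {v. fst v = 0} = {0} \<times> {..<p}" "?V \<inter> - {v. fst v = 0} = Suc ` {..<q} \<times> {..<2 * r}"
      by (auto simp: join_vertices_def)
    then show ?thesis
      by (simp add: sum.If_cases finite_join_vertices card_cartesian_product card_image)
  qed
  finally show ?thesis .
qed

definition has_growth_exponent :: "(nat \<Rightarrow> real) \<Rightarrow> real \<Rightarrow> bool" where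
  "has_growth_exponent f e \<longleftrightarrow>
     (\<forall>\<^sub>F n in sequentially. 0 < f n) \<and> ((\<lambda>n. ln (f n) / ln (real n)) \<longlongrightarrow> e) sequentially"

lemma eventually_ln_pos: "\<forall>\<^sub>F n in sequentially. 0 < ln (real n)"
  by (rule eventually_sequentiallyI[of 2]) simp

lemma growth_exponent_cong:
  assumes "has_growth_exponent f e" "\<forall>\<^sub>F n in sequentially. f n = g n" "e = e'"
  shows "has_growth_exponent g e'"
proof -
  have pos: "\<forall>\<^sub>F n in sequentially. 0 < f n"
    and lim: "((\<lambda>n. ln (f n) / ln (real n)) \<longlongrightarrow> e) sequentially"
    using assms(1) by (simp_all add: has_growth_exponent_def)
  have "\<forall>\<^sub>F n in sequentially. ln (f n) / ln (real n) = ln (g n) / ln (real n)"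
    using assms(2) by (rule eventually_mono) simp
  then have "((\<lambda>n. ln (g n) / ln (real n)) \<longlongrightarrow> e') sequentially"
    using lim unfolding assms(3) by (rule tendsto_cong[THEN iffD1])
  moreover have "\<forall>\<^sub>F n in sequentially. 0 < g n"
    by (rule eventually_elim2[OF pos assms(2)]) simp
  ultimately show ?thesis by (simp add: has_growth_exponent_def)
qed

lemma growth_exponent_power: "has_growth_exponent (\<lambda>n. real n ^ k) (real k)"
proof -
  have "\<forall>\<^sub>F n in sequentially. real k = ln (real n ^ k) / ln (real n)"
    using eventually_ln_pos by (rule eventually_mono) (simp add: ln_realpow)
  then have "((\<lambda>n. ln (real n ^ k) / ln (real n)) \<longlongrightarrow> real k) sequentially"
    by (rule tendsto_eventually[OF eventually_mono]) simp
  moreover have "\<forall>\<^sub>F n in sequentially. 0 < real n ^ k"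
    by (rule eventually_sequentiallyI[of 1]) simp
  ultimately show ?thesis by (simp add: has_growth_exponent_def)
qed

lemma growth_exponent_const:
  assumes "0 < c"
  shows "has_growth_exponent (\<lambda>_. c) 0"
proof -
  have "filterlim (\<lambda>n. ln (real n)) at_infinity sequentially"
    using filterlim_compose[OF ln_at_top filterlim_real_sequentially]
    by (rule filterlim_at_top_imp_at_infinity)
  then have "((\<lambda>n. ln c / ln (real n)) \<longlongrightarrow> 0) sequentially"
    by (rule tendsto_divide_0[OF tendsto_const])
  then show ?thesis using assms by (simp add: has_growth_exponent_def)
qed

lemma growth_exponent_mult:
  assumes "has_growth_exponent f a" "has_growth_exponent g b"
  shows "has_growth_exponent (\<lambda>n. f n * g n) (a + b)"
proof -
  have pos: "\<forall>\<^sub>F n in sequentially. 0 < f n \<and> 0 < g n"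
    using assms unfolding has_growth_exponent_def by (simp add: eventually_conj)
  have "((\<lambda>n. ln (f n) / ln (real n) + ln (g n) / ln (real n)) \<longlongrightarrow> a + b) sequentially"
    using assms unfolding has_growth_exponent_def by (simp add: tendsto_add)
  moreover have "\<forall>\<^sub>F n in sequentially.
      ln (f n) / ln (real n) + ln (g n) / ln (real n) = ln (f n * g n) / ln (real n)"
    using pos by (rule eventually_mono) (simp add: ln_mult add_divide_distrib)
  ultimately have "((\<lambda>n. ln (f n * g n) / ln (real n)) \<longlongrightarrow> a + b) sequentially"
    by (rule tendsto_cong[THEN iffD1, rotated])
  moreover have "\<forall>\<^sub>F n in sequentially. 0 < f n * g n"
    using pos by (rule eventually_mono) simp
  ultimately show ?thesis by (simp add: has_growth_exponent_def)
qed

lemma growth_exponent_pow: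
  assumes "has_growth_exponent f a"
  shows "has_growth_exponent (\<lambda>n. f n ^ k) (real k * a)"
proof (induction k)
  case 0
  show ?case using growth_exponent_const[of 1] by simp
next
  case (Suc k)
  show ?case
    using growth_exponent_mult[OF assms Suc]
    by (rule growth_exponent_cong) (auto simp: algebra_simps)
qed

(* The sum is squeezed between the larger summand and twice the larger summand. *)
lemma growth_exponent_add:
  assumes "has_growth_exponent f a" "has_growth_exponent g b"
  shows "has_growth_exponent (\<lambda>n. f n + g n) (max a b)"
proof -
  have pos: "\<forall>\<^sub>F n in sequentially. 0 < f n \<and> 0 < g n \<and> 0 < ln (real n)"
    using assms eventually_ln_pos unfolding has_growth_exponent_def by (simp add: eventually_conj)
  let ?m = "\<lambda>n. max (ln (f n) / ln (real n)) (ln (g n) / ln (real n))"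
  have lower: "\<forall>\<^sub>F n in sequentially. ?m n \<le> ln (f n + g n) / ln (real n)"
    using pos by (rule eventually_mono) (simp add: divide_right_mono)
  have upper: "\<forall>\<^sub>F n in sequentially. ln (f n + g n) / ln (real n) \<le> ?m n + ln 2 / ln (real n)"
    using pos
  proof (rule eventually_mono, elim conjE)
    fix n assume f: "0 < f n" and g: "0 < g n" and l: "0 < ln (real n)"
    have "ln (f n + g n) \<le> ln (2 * max (f n) (g n))"
      using f g by simp
    also have "\<dots> = max (ln (f n)) (ln (g n)) + ln 2"
      using f g by (simp add: ln_mult max_def)
    finally have "ln (f n + g n) / ln (real n) \<le> (max (ln (f n)) (ln (g n)) + ln 2) / ln (real n)"
      using l by (simp add: divide_right_mono)
    then show "ln (f n + g n) / ln (real n) \<le> ?m n + ln 2 / ln (real n)"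
      using l by (simp add: max_divide_distrib_right add_divide_distrib)
  qed
  have lim_m: "(?m \<longlongrightarrow> max a b) sequentially"
    using assms unfolding has_growth_exponent_def by (simp add: tendsto_max)
  moreover have "((\<lambda>n. ln 2 / ln (real n)) \<longlongrightarrow> 0) sequentially"
    using growth_exponent_const[of 2] by (simp add: has_growth_exponent_def)
  ultimately have "((\<lambda>n. ?m n + ln 2 / ln (real n)) \<longlongrightarrow> max a b) sequentially"
    using tendsto_add by fastforce
  with lim_m have "((\<lambda>n. ln (f n + g n) / ln (real n)) \<longlongrightarrow> max a b) sequentially"
    by (rule real_tendsto_sandwich[OF lower upper])
  moreover have "\<forall>\<^sub>F n in sequentially. 0 < f n + g n"
    using pos by (rule eventually_mono) simp
  ultimately show ?thesis by (simp add: has_growth_exponent_def)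
qed

lemma growth_exponent_sum:
  assumes "finite I" "I \<noteq> {}" "\<And>i. i \<in> I \<Longrightarrow> has_growth_exponent (f i) (e i)"
  shows "has_growth_exponent (\<lambda>n. \<Sum>i\<in>I. f i n) (Max (e ` I))"
  using assms
proof (induction I rule: finite_ne_induct)
  case (singleton i)
  then show ?case by simp
next
  case (insert i I)
  then have "has_growth_exponent (\<lambda>n. f i n + (\<Sum>i\<in>I. f i n)) (max (e i) (Max (e ` I)))"
    by (intro growth_exponent_add) auto
  then show ?case using insert by simp
qed

lemma tendsto_fun_componentwise:
  fixes f :: "'a \<Rightarrow> 'i \<Rightarrow> 'b::topological_space"
  assumes "\<And>i. ((\<lambda>x. f x i) \<longlongrightarrow> l i) F"
  shows "(f \<longlongrightarrow> l) F"
proof -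
  have "limitin (product_topology (\<lambda>_. euclidean) UNIV) f l F"
    using assms by (simp add: limitin_componentwise)
  then show ?thesis by (simp add: euclidean_product_topology)
qed

lemma trunc_vec_in_trop_N_U:
  assumes graphs: "\<And>n. simple_graph (G n)"
    and exps: "\<And>k. k \<le> m \<Longrightarrow> has_growth_exponent (\<lambda>n. hom_vec m (G n) k) (y k)"
  shows "trunc_vec m y \<in> trop_N_U m"
proof -
  define P where "P = {x \<in> N_U m. \<forall>k\<le>m. 0 < x k}"
  define p where "p n = (\<lambda>k. log_vec m (hom_vec m (G n)) k / ln (real n))" for n
  have "\<forall>\<^sub>F n in sequentially. \<forall>k\<in>{..m}. 0 < hom_vec m (G n) k"
    using exps unfolding has_growth_exponent_def by (simp add: eventually_ball_finite)
  then have "\<forall>\<^sub>F n in sequentially. p n \<in> closure (conical_hull (log_vec m ` P))"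
    using eventually_ln_pos
  proof (rule eventually_elim2)
    fix n assume pos: "\<forall>k\<in>{..m}. 0 < hom_vec m (G n) k" and ln_pos: "0 < ln (real n)"
    have "hom_vec m (G n) \<in> N_U m"
      unfolding N_U_def using graphs by blast
    then have "log_vec m (hom_vec m (G n)) \<in> log_vec m ` P"
      using pos by (simp add: P_def)
    then have "p n \<in> conical_hull (log_vec m ` P)"
      unfolding conical_hull_def
      using ln_pos
      by (intro CollectI exI[of _ "{log_vec m (hom_vec m (G n))}"] exI[of _ "\<lambda>_. 1 / ln (real n)"])
        (auto simp: p_def)
    then show "p n \<in> closure (conical_hull (log_vec m ` P))"
      using closure_subset by blast
  qed
  moreover have "(p \<longlongrightarrow> trunc_vec m y) sequentially"
  proof (rule tendsto_fun_componentwise)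
    fix k
    show "((\<lambda>n. p n k) \<longlongrightarrow> trunc_vec m y k) sequentially"
      using exps[of k]
      by (cases "k \<le> m") (simp_all add: p_def log_vec_def trunc_vec_def has_growth_exponent_def)
  qed
  ultimately show ?thesis
    unfolding trop_N_U_def P_def[symmetric]
    by (rule Lim_in_closed_set[OF closed_closure _ sequentially_bot])
qed

(* For x <= r, join_exponent k is the growth exponent of the k-th entry of hom_vec:
   the vertex count for k = 0 and the leading terms of spider_count_join otherwise. *)
definition join_sizes :: "nat \<Rightarrow> nat option \<times> nat \<times> nat \<Rightarrow> nat \<times> nat \<times> nat" where
  "join_sizes n = (\<lambda>(x, q, r). (case x of None \<Rightarrow> 0 | Some e \<Rightarrow> n ^ e, n ^ q, n ^ r))"

definition join_exponent :: "nat \<Rightarrow> nat option \<times> nat \<times> nat \<Rightarrow> nat" where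
  "join_exponent k = (\<lambda>(x, q, r).
     if k = 0 then (case x of None \<Rightarrow> q + r | Some e \<Rightarrow> max e (q + r))
     else max (case x of None \<Rightarrow> 0
               | Some e \<Rightarrow> max (e + k * q + (k + 1) * r) (e + 2 * q + (k + 1) * r))
              (q + (k + 2) * r))"

lemma growth_exponent_copy_vertices:
  "has_growth_exponent (\<lambda>n. 2 * real n ^ q * real n ^ r) (real q + real r)"
  using growth_exponent_mult[OF growth_exponent_mult[OF growth_exponent_const growth_exponent_power]
      growth_exponent_power, of 2 q r]
  by simp

lemma growth_exponent_card_join_vertices:
  "has_growth_exponent (\<lambda>n. real (card (join_vertices (join_sizes n c)))) (join_exponent 0 c)"
proof -
  obtain x q r where c: "c = (x, q, r)" by (cases c) auto
  note B = growth_exponent_copy_vertices[of q r]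
  show ?thesis
  proof (cases x)
    case None
    show ?thesis
      using B by (rule growth_exponent_cong)
        (simp_all add: c None join_sizes_def join_exponent_def card_join_vertices)
  next
    case (Some e)
    show ?thesis
      using growth_exponent_add[OF growth_exponent_power[of e] B]
      by (rule growth_exponent_cong)
        (simp_all add: c Some join_sizes_def join_exponent_def card_join_vertices)
  qed
qed

lemma growth_exponent_spider_count_join:
  assumes "pred_option (\<lambda>e. e \<le> r) x"
  shows "has_growth_exponent
    (\<lambda>n. real (spider_count j (join_vertices (join_sizes n (x, q, r)))
                              (join_adj (join_sizes n (x, q, r)))))
    (join_exponent (Suc j) (x, q, r))"
proof -
  let ?Q = "\<lambda>n. real n ^ q" and ?R = "\<lambda>n. real n ^ r"
  note B = growth_exponent_copy_vertices[of q r]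
  note R = growth_exponent_power[of r]
  show ?thesis
  proof (cases x)
    case None
    have "has_growth_exponent (\<lambda>n. 2 * ?Q n * ?R n * (?R n ^ j * (?R n * ?R n)))
      (real q + real r + (real j * real r + (real r + real r)))"
      by (intro growth_exponent_mult growth_exponent_pow B R)
    then show ?thesis
      by (rule growth_exponent_cong)
        (simp_all add: None join_sizes_def join_exponent_def spider_count_join algebra_simps)
  next
    case (Some e)
    note P = growth_exponent_power[of e]
    have er: "e \<le> r" using assms Some by simp
    have PR: "has_growth_exponent (\<lambda>n. real n ^ e + ?R n) (real r)"
      using growth_exponent_add[OF P R] er by (simp add: max_def)
    let ?P = "\<lambda>n. real n ^ e"
    have "has_growth_exponent
      (\<lambda>n. ?P n * ((2 * ?Q n * ?R n) ^ j * (2 * ?Q n * ?R n * (?P n + ?R n))) +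
           2 * ?Q n * ?R n * ((?P n + ?R n) ^ j * (?P n * (2 * ?Q n * ?R n) + ?R n * (?P n + ?R n))))
      (max (real e + (real j * (real q + real r) + (real q + real r + real r)))
           (real q + real r +
            (real j * real r + max (real e + (real q + real r)) (real r + real r))))"
      by (intro growth_exponent_add growth_exponent_mult growth_exponent_pow B P R PR)
    then show ?thesis
      by (rule growth_exponent_cong)
        (simp_all add: Some join_sizes_def join_exponent_def spider_count_join of_nat_max
          max_add_distrib_left max_add_distrib_right algebra_simps max.assoc)
  qed
qed

definition join_graph :: "(nat \<times> nat \<times> nat) list \<Rightarrow> graph" where
  "join_graph cs = graph_of (SIGMA i:{..<length cs}. join_vertices (cs ! i))
     (\<lambda>(i, u) (i', v). i = i' \<and> join_adj (cs ! i) u v)"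

lemma
  shows finite_join_graph_vertices: "finite (SIGMA i:{..<length cs}. join_vertices (cs ! i))"
    and symp_join_graph_adj: "symp (\<lambda>(i, u) (i', v). i = i' \<and> join_adj (cs ! i) u v)"
    and irreflp_join_graph_adj: "irreflp (\<lambda>(i, u) (i', v). i = i' \<and> join_adj (cs ! i) u v)"
  using symp_join_adj irreflp_join_adj
  by (auto simp: finite_join_vertices symp_def irreflp_def)

lemma simple_join_graph: "simple_graph (join_graph cs)"
  unfolding join_graph_def
  by (rule simple_graph_of[OF finite_join_graph_vertices symp_join_graph_adj
        irreflp_join_graph_adj])

lemma hom_count_S0_join_graph:
  "hom_count S0 (join_graph cs) = (\<Sum>i<length cs. card (join_vertices (cs ! i)))"
  by (simp add: join_graph_def hom_count_S0_graph_of card_SigmaI finite_join_vertices)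

lemma hom_count_S21_join_graph:
  "hom_count (S21 k) (join_graph cs) =
    (\<Sum>i<length cs. spider_count k (join_vertices (cs ! i)) (join_adj (cs ! i)))"
  unfolding join_graph_def
  by (simp add: hom_count_S21_graph_of finite_join_graph_vertices symp_join_graph_adj
      irreflp_join_graph_adj spider_count_Sigma finite_join_vertices)

lemma growth_exponent_hom_vec_join_graph:
  assumes "cs \<noteq> []" "\<forall>(x, q, r)\<in>set cs. pred_option (\<lambda>e. e \<le> r) x" "k \<le> m"
  shows "has_growth_exponent (\<lambda>n. hom_vec m (join_graph (map (join_sizes n) cs)) k)
    (real (Max (join_exponent k ` set cs)))"
proof -
  define f where "f i = (\<lambda>n. let c = join_sizes n (cs ! i) in
    real (if k = 0 then card (join_vertices c) else spider_count (k - 1) (join_vertices c) (join_adj c)))"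
    for i
  have "has_growth_exponent (f i) (real (join_exponent k (cs ! i)))" if "i < length cs" for i
  proof (cases k)
    case 0
    then show ?thesis using growth_exponent_card_join_vertices by (simp add: f_def Let_def)
  next
    case (Suc j)
    obtain x q r where c: "cs ! i = (x, q, r)" by (cases "cs ! i") auto
    then have "pred_option (\<lambda>e. e \<le> r) x" using assms(2) that nth_mem by fastforce
    then show ?thesis using growth_exponent_spider_count_join c Suc by (simp add: f_def Let_def)
  qed
  then have "has_growth_exponent (\<lambda>n. \<Sum>i<length cs. f i n)
      (Max ((\<lambda>i. real (join_exponent k (cs ! i))) ` {..<length cs}))"
    using assms(1) by (intro growth_exponent_sum) auto
  moreover have "(\<lambda>i. real (join_exponent k (cs ! i))) ` {..<length cs} =
      real ` join_exponent k ` set cs"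
    by (auto simp: set_conv_nth)
  ultimately show ?thesis
    using assms(1,3) mono_Max_commute[of real, symmetric]
    by (auto simp: f_def Let_def mono_def hom_vec_def trunc_vec_def hom_count_S0_join_graph
        hom_count_S21_join_graph elim!: growth_exponent_cong)
qed

lemma trunc_vec_in_trop_N_U_join:
  assumes "cs \<noteq> []" "\<forall>(x, q, r)\<in>set cs. pred_option (\<lambda>e. e \<le> r) x"
    and "\<And>k. y k = real (Max (join_exponent k ` set cs))"
  shows "trunc_vec m y \<in> trop_N_U m"
  using growth_exponent_hom_vec_join_graph[OF assms(1,2)] assms(3)
  by (intro trunc_vec_in_trop_N_U[OF simple_join_graph]) simp

(* Comparing the exponents, which are bilinear in k and t, needs no nonlinear fact beyond these
   products; linear arithmetic does the rest. *)
lemma exponent_regions: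
  fixes k t c :: nat
  obtains "k = 0" | "k = 1" | "k = 2"
  | "3 \<le> k" "k \<le> t + c" "3 * real t \<le> real k * real t"
  | "t + c < k" "(real c + 1) * real t \<le> real k * real t"
proof -
  consider "k = 0" | "k = 1" | "k = 2" | "3 \<le> k" "k \<le> t + c" | "t + c < k" by force
  then show thesis
  proof cases
    case 4
    moreover have "3 * real t \<le> real k * real t"
      using \<open>3 \<le> k\<close> by (intro mult_right_mono) auto
    ultimately show thesis using that(4) by blast
  next
    case 5
    moreover have "(real c + 1) * real t \<le> real k * real t"
      using \<open>t + c < k\<close> by (intro mult_right_mono) auto
    ultimately show thesis using that(5) by blast
  qed (use that in blast)+
qed

lemma s1_in_trop_N_U: "trunc_vec m s1 \<in> trop_N_U m"
  by (rule trunc_vec_in_trop_N_U_join[of "[(Some 0, 3, 0), (None, 0, 2)]"])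
    (auto simp: s1_def join_exponent_def max_def)

lemma s2_in_trop_N_U: "trunc_vec m s2 \<in> trop_N_U m"
  by (rule trunc_vec_in_trop_N_U_join[of "[(Some 0, 3, 3), (None, 0, 4)]"])
    (auto simp: s2_def join_exponent_def max_def)

lemma s3_in_trop_N_U: "trunc_vec m s3 \<in> trop_N_U m"
  by (rule trunc_vec_in_trop_N_U_join[of "[(Some 0, 2, 0), (None, 1, 1)]"])
    (auto simp: s3_def join_exponent_def max_def)

lemma s4_in_trop_N_U: "trunc_vec m s4 \<in> trop_N_U m"
  by (rule trunc_vec_in_trop_N_U_join[of "[(Some 0, 3, 0), (Some 0, 2, 1), (None, 0, 2)]"])
    (auto simp: s4_def join_exponent_def max_def)

lemma r1_in_trop_N_U:
  assumes "5 \<le> i"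
  shows "trunc_vec m (r1 i) \<in> trop_N_U m"
proof -
  obtain t where i: "i = t + 5" using assms by (metis add.commute le_Suc_ex)
  let ?cs = "[(Some 0, 6 * t + 15, 0), (None, 0, 4 * t + 10), (Some 6, 3 * t + 3, 3 * t + 9)]"
  have exps: "r1 i k = real (Max (join_exponent k ` set ?cs))" for k
    by (rule exponent_regions[where k = k and t = t and c = 5]; rule antisym)
      (auto simp: i r1_def join_exponent_def of_nat_max le_max_iff_disj algebra_simps)
  show ?thesis by (rule trunc_vec_in_trop_N_U_join[of ?cs]) (simp_all add: exps)
qed

lemma r2_in_trop_N_U:
  assumes "5 \<le> i"
  shows "trunc_vec m (r2 i) \<in> trop_N_U m"
proof -
  obtain t where i: "i = t + 5" using assms by (metis add.commute le_Suc_ex)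
  let ?cs = "[(Some 0, t + 7, 0), (None, 0, t + 5)]"
  have exps: "r2 i k = real (Max (join_exponent k ` set ?cs))" for k
    by (rule exponent_regions[where k = k and t = t and c = 5]; rule antisym)
      (auto simp: i r2_def join_exponent_def of_nat_max le_max_iff_disj algebra_simps)
  show ?thesis by (rule trunc_vec_in_trop_N_U_join[of ?cs]) (simp_all add: exps)
qed

lemma r3_in_trop_N_U:
  assumes "5 \<le> i"
  shows "trunc_vec m (r3 i) \<in> trop_N_U m"
proof -
  obtain t where i: "i = t + 5" using assms by (metis add.commute le_Suc_ex)
  let ?cs = "[(Some 0, 3 * t + 6, 0), (None, 0, 2 * t + 4), (Some 2, 2 * t + 2, t + 3)]"
  have exps: "r3 i k = real (Max (join_exponent k ` set ?cs))" for k
    by (rule exponent_regions[where k = k and t = t and c = 5]; rule antisym)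
      (auto simp: i r3_def join_exponent_def of_nat_max le_max_iff_disj algebra_simps)
  show ?thesis by (rule trunc_vec_in_trop_N_U_join[of ?cs]) (simp_all add: exps)
qed

lemma r4_in_trop_N_U:
  assumes "5 \<le> i"
  shows "trunc_vec m (r4 i) \<in> trop_N_U m"
proof -
  obtain t where i: "i = t + 5" using assms by (metis add.commute le_Suc_ex)
  let ?cs = "[(Some 0, 2 * t + 5, 0), (Some 2, t + 1, t + 3)]"
  have exps: "r4 i k = real (Max (join_exponent k ` set ?cs))" for k
    by (rule exponent_regions[where k = k and t = t and c = 5]; rule antisym)
      (auto simp: i r4_def join_exponent_def of_nat_max le_max_iff_disj algebra_simps)
  show ?thesis by (rule trunc_vec_in_trop_N_U_join[of ?cs]) (simp_all add: exps)
qed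

lemma r5_in_trop_N_U:
  assumes "3 \<le> i"
  shows "trunc_vec m (r5 i) \<in> trop_N_U m"
proof -
  obtain t where i: "i = t + 3" using assms by (metis add.commute le_Suc_ex)
  let ?cs = "[(Some 0, 1, 0), (None, t + 3, 0)]"
  have exps: "r5 i k = real (Max (join_exponent k ` set ?cs))" for k
    by (rule exponent_regions[where k = k and t = t and c = 3]; rule antisym)
      (auto simp: i r5_def join_exponent_def of_nat_max le_max_iff_disj algebra_simps)
  show ?thesis by (rule trunc_vec_in_trop_N_U_join[of ?cs]) (simp_all add: exps)
qed

lemma r6_in_trop_N_U:
  assumes "4 \<le> i"
  shows "trunc_vec m (r6 i) \<in> trop_N_U m"
proof -
  obtain t where i: "i = t + 4" using assms by (metis add.commute le_Suc_ex)
  let ?cs = "[(Some 0, t + 5, 0), (None, 2, t + 3)]"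
  have exps: "r6 i k = real (Max (join_exponent k ` set ?cs))" for k
    by (rule exponent_regions[where k = k and t = t and c = 4]; rule antisym)
      (auto simp: i r6_def join_exponent_def of_nat_max le_max_iff_disj algebra_simps)
  show ?thesis by (rule trunc_vec_in_trop_N_U_join[of ?cs]) (simp_all add: exps)
qed

theorem lemma4p4:
  fixes m :: nat
  assumes "1 \<le> m"
  shows "trunc_vec m s1 \<in> trop_N_U m \<and> trunc_vec m s2 \<in> trop_N_U m \<and>
         trunc_vec m s3 \<in> trop_N_U m \<and> trunc_vec m s4 \<in> trop_N_U m \<and>
         (\<forall>i. 5 \<le> i \<and> i \<le> m - 1 \<longrightarrow> trunc_vec m (r1 i) \<in> trop_N_U m) \<and>
         (\<forall>i. 5 \<le> i \<and> i \<le> m - 1 \<longrightarrow> trunc_vec m (r2 i) \<in> trop_N_U m) \<and>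
         (\<forall>i. 5 \<le> i \<and> i \<le> m - 1 \<longrightarrow> trunc_vec m (r3 i) \<in> trop_N_U m) \<and>
         (\<forall>i. 5 \<le> i \<and> i \<le> m - 1 \<longrightarrow> trunc_vec m (r4 i) \<in> trop_N_U m) \<and>
         (\<forall>i. 3 \<le> i \<and> i \<le> m - 1 \<longrightarrow> trunc_vec m (r5 i) \<in> trop_N_U m) \<and>
         (\<forall>i. 4 \<le> i \<and> i \<le> m - 1 \<longrightarrow> trunc_vec m (r6 i) \<in> trop_N_U m)"
  using s1_in_trop_N_U s2_in_trop_N_U s3_in_trop_N_U s4_in_trop_N_U r1_in_trop_N_U r2_in_trop_N_U
    r3_in_trop_N_U r4_in_trop_N_U r5_in_trop_N_U r6_in_trop_N_U
  by blast

end
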